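(* Let $n\ge2$ be even. For $q>0$, let $\omega=(nq,\ldots,nq,-nq,\ldots,-nq)\in\mathbb{R}^n$ (with $n/2$ entries equal to $nq$ and $n/2$ entries equal to $-nq$) and $k=(n,\ldots,n)$. The maximum over $q>0$ of the number of distinct equilibria $\theta\in(-\pi,\pi]^n$ satisfying $$\omega_\nu=\frac1n\sum_{\mu=1}^nk_\nu k_\mu\sin(\theta_\nu-\theta_\mu)\ (\nu=1,\ldots,n),\qquad \sum_{\mu=1}^nk_\mu e^{i\theta_\mu}\in\mathbb{R}_{\ge0},$$ is $2^n-\binom{n}{n/2}$, and this maximum is attained for every $0<q<1$. *)

theory Defs
  imports Complex_Main "HOL-Library.FuncSet"
begin

text \<open>Indices are 0-based: \<open>\<nu>, \<mu> \<in> {0..<n}\<close>. A phase vector \<open>\<theta> \<in> (-pi,pi]^n\<close>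
  is an extensional function on \<open>{0..<n}\<close>.\<close>

definition kur_omega :: "nat \<Rightarrow> real \<Rightarrow> nat \<Rightarrow> real" where
  "kur_omega n q \<nu> = (if \<nu> < n div 2 then real n * q else - (real n * q))"

definition kur_k :: "nat \<Rightarrow> nat \<Rightarrow> real" where
  "kur_k n \<mu> = real n"

definition equilibria :: "nat \<Rightarrow> (nat \<Rightarrow> real) \<Rightarrow> (nat \<Rightarrow> real) \<Rightarrow> (nat \<Rightarrow> real) set" where
  "equilibria n \<omega> k =
     {\<theta> \<in> {0..<n} \<rightarrow>\<^sub>E {-pi<..pi}.
        (\<forall>\<nu><n. \<omega> \<nu> = (1 / real n) * (\<Sum>\<mu><n. k \<nu> * k \<mu> * sin (\<theta> \<nu> - \<theta> \<mu>))) \<and>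
        (\<Sum>\<mu><n. complex_of_real (k \<mu>) * exp (\<i> * complex_of_real (\<theta> \<mu>))) \<in> \<real> \<and>
        0 \<le> Re (\<Sum>\<mu><n. complex_of_real (k \<mu>) * exp (\<i> * complex_of_real (\<theta> \<mu>)))}"

end

theory Submission
  imports Defs
begin

text \<open>With identical couplings the equilibrium equations only involve the order parameter
  \<open>r = \<Sum>\<mu>. e\<^sup>i\<^sup>\<theta>\<^sup>\<mu>\<close>, which must be real and nonnegative. They reduce to \<open>\<plusminus>q = r sin \<theta>\<^sub>\<nu>\<close>, so all
  phases share the same \<open>|sin|\<close>: \<open>\<theta>\<^sub>\<nu> = \<plusminus>a\<close> or \<open>\<plusminus>(\<pi> - a)\<close> for one \<open>a \<in> (0, \<pi>/2)\<close>.
  Writing \<open>P\<close> for the set of phases with positive cosine, \<open>r = cos a (2|P| - n)\<close>, so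
  \<open>|P| > n/2\<close>, and the remaining condition is \<open>sin 2a \<cdot> (2|P| - n) = 2q\<close>, which has at most two
  solutions \<open>a\<close>, and exactly two when \<open>q < 1\<close>. Equilibria correspond bijectively to such pairs
  \<open>(P, a)\<close>, and half of the \<open>2\<^sup>n - (n choose n/2)\<close> unbalanced subsets \<open>P\<close> have \<open>|P| > n/2\<close>.\<close>

lemma arcsin_sin_cases:
  fixes x :: real
  assumes "0 < x" "x < pi"
  shows "x = arcsin (sin x) \<or> x = pi - arcsin (sin x)"
proof (cases "x \<le> pi/2")
  case True
  then show ?thesis using assms by (simp add: arcsin_sin)
next
  case False
  then have "arcsin (sin (pi - x)) = pi - x" using assms by (intro arcsin_sin) auto
  then show ?thesis by simp
qed

lemma sin_eq_sin_cases:
  fixes x a :: real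
  assumes "-pi < x" "x \<le> pi" "0 < a" "a < pi/2" "sin x = sin a"
  shows "x = a \<or> x = pi - a"
proof -
  have sin_a: "sin a > 0" using assms by (intro sin_gt_zero) auto
  have "x > 0"
  proof (rule ccontr)
    assume "\<not> x > 0"
    then have "sin (-x) \<ge> 0" using assms(1) by (intro sin_ge_zero) auto
    then show False using sin_a assms(5) by simp
  qed
  moreover have "x \<noteq> pi" using sin_a assms(5) by auto
  moreover have "arcsin (sin a) = a" using assms(3,4) by (intro arcsin_sin) auto
  ultimately show ?thesis using arcsin_sin_cases[of x] assms by force
qed

lemma sin_eq_minus_sin_cases:
  fixes x a :: real
  assumes "-pi < x" "x \<le> pi" "0 < a" "a < pi/2" "sin x = - sin a"
  shows "x = - a \<or> x = -(pi - a)"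
proof -
  have "sin a > 0" using assms by (intro sin_gt_zero) auto
  then have "x \<noteq> pi" using assms(5) by auto
  then have "-pi < -x" "-x \<le> pi" using assms(1,2) by auto
  from sin_eq_sin_cases[OF this assms(3,4)] assms(5) show ?thesis by auto
qed

lemma sin_double_solutions_subset:
  fixes b :: real
  shows "{a. 0 < a \<and> a < pi/2 \<and> sin (2*a) = b} \<subseteq> {arcsin b / 2, pi/2 - arcsin b / 2}"
proof
  fix a assume "a \<in> {a. 0 < a \<and> a < pi/2 \<and> sin (2*a) = b}"
  then have "0 < 2*a" "2*a < pi" "sin (2*a) = b" by auto
  from arcsin_sin_cases[OF this(1,2)] this(3) show "a \<in> {arcsin b / 2, pi/2 - arcsin b / 2}"
    by auto
qed

lemma card_sin_double_solutions:
  fixes b :: real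
  assumes "0 < b" "b < 1"
  shows "card {a. 0 < a \<and> a < pi/2 \<and> sin (2*a) = b} = 2"
proof -
  define t where "t = arcsin b"
  have t: "0 < t" "t < pi/2"
    using arcsin_less_arcsin[of 0 b] arcsin_less_arcsin[of b 1] assms by (auto simp: t_def)
  have "sin t = b" using assms by (simp add: t_def)
  moreover have "2 * (pi/2 - t/2) = pi - t" by (simp add: algebra_simps)
  ultimately have "{t/2, pi/2 - t/2} \<subseteq> {a. 0 < a \<and> a < pi/2 \<and> sin (2*a) = b}"
    using t by auto
  then have "{a. 0 < a \<and> a < pi/2 \<and> sin (2*a) = b} = {t/2, pi/2 - t/2}"
    using sin_double_solutions_subset[of b] by (auto simp: t_def)
  moreover have "t/2 \<noteq> pi/2 - t/2" using t by simp
  ultimately show ?thesis by simp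
qed

lemma finite_sin_double_solutions: "finite {a. 0 < a \<and> a < pi/2 \<and> sin (2*a) = b}"
  by (rule finite_subset[OF sin_double_solutions_subset]) simp

lemma card_sin_double_solutions_le: "card {a. 0 < a \<and> a < pi/2 \<and> sin (2*a) = b} \<le> 2"
proof -
  have "card {a. 0 < a \<and> a < pi/2 \<and> sin (2*a) = b} \<le> card {arcsin b / 2, pi/2 - arcsin b / 2}"
    by (rule card_mono[OF _ sin_double_solutions_subset]) simp
  also have "\<dots> \<le> 2" by (simp add: card_insert_if)
  finally show ?thesis .
qed

lemma sum_plus_minus:
  fixes c :: "'a::comm_ring_1"
  assumes "P \<subseteq> {..<n}"
  shows "(\<Sum>\<nu><n. if \<nu> \<in> P then c else - c) = c * (2 * of_nat (card P) - of_nat n)"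
proof -
  have card_P: "card P \<le> n" using card_mono[OF _ assms] by simp
  have "(\<Sum>\<nu><n. if \<nu> \<in> P then c else - c) = of_nat (card P) * c - of_nat (card ({..<n} - P)) * c"
    using assms by (simp add: sum.If_cases Int_absorb1 Diff_eq)
  also have "card ({..<n} - P) = n - card P"
    using assms by (simp add: card_Diff_subset finite_subset)
  also have "of_nat (card P) * c - of_nat (n - card P) * c = c * (2 * of_nat (card P) - of_nat n)"
    using card_P by (simp add: of_nat_diff algebra_simps)
  finally show ?thesis .
qed

lemma card_subsets_more_than_half:
  assumes "finite A" "even (card A)"
  shows "2 * card {P. P \<subseteq> A \<and> card A < 2 * card P} + (card A choose (card A div 2)) = 2 ^ card A"
proof -
  define U where "U = {P. P \<subseteq> A \<and> card A < 2 * card P}"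
  define L where "L = {P. P \<subseteq> A \<and> 2 * card P < card A}"
  define M where "M = {P. P \<subseteq> A \<and> card P = card A div 2}"
  have fin: "finite U" "finite L" "finite M" using assms(1) unfolding U_def L_def M_def
    by (auto intro: finite_subset[of _ "Pow A"])
  have "Pow A = U \<union> L \<union> M" using assms(2) unfolding U_def L_def M_def by auto
  moreover have "U \<inter> L = {}" "(U \<union> L) \<inter> M = {}" using assms(2) unfolding U_def L_def M_def by auto
  ultimately have "card (Pow A) = card U + card L + card M"
    using fin by (simp add: card_Un_disjoint)
  then have "2 ^ card A = card U + card L + card M"
    using assms(1) by (simp add: card_Pow)
  moreover have "card M = card A choose (card A div 2)"
    unfolding M_def using n_subsets[OF assms(1)] by simp
  moreover have card_complement: "card (A - P) + card P = card A" if "P \<subseteq> A" for P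
    using that assms(1) card_Diff_subset[of P A] card_mono[of A P] by (simp add: finite_subset)
  have "bij_betw (\<lambda>P. A - P) U L"
    by (rule bij_betw_byWitness[where f' = "\<lambda>P. A - P"])
      (auto simp: U_def L_def dest: card_complement)
  then have "card L = card U" by (simp add: bij_betw_same_card)
  ultimately show ?thesis unfolding U_def by simp
qed

lemma kur_interaction_sum:
  fixes \<theta> :: "nat \<Rightarrow> real"
  assumes "n > 0"
  shows "(1 / real n) * (\<Sum>\<mu><n. kur_k n \<nu> * kur_k n \<mu> * sin (\<theta> \<nu> - \<theta> \<mu>)) =
    real n * (sin (\<theta> \<nu>) * (\<Sum>\<mu><n. cos (\<theta> \<mu>)) - cos (\<theta> \<nu>) * (\<Sum>\<mu><n. sin (\<theta> \<mu>)))"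
  using assms by (simp add: kur_k_def sin_diff sum_distrib_left sum_subtractf algebra_simps)

lemma kur_order_parameter:
  fixes \<theta> :: "nat \<Rightarrow> real"
  shows "Re (\<Sum>\<mu><n. complex_of_real (kur_k n \<mu>) * exp (\<i> * complex_of_real (\<theta> \<mu>))) = real n * (\<Sum>\<mu><n. cos (\<theta> \<mu>))"
    and "Im (\<Sum>\<mu><n. complex_of_real (kur_k n \<mu>) * exp (\<i> * complex_of_real (\<theta> \<mu>))) = real n * (\<Sum>\<mu><n. sin (\<theta> \<mu>))"
  by (simp_all add: kur_k_def Re_exp Im_exp sum_distrib_left)

lemma kur_omega_eq: "kur_omega n q \<nu> = real n * (if \<nu> < n div 2 then q else - q)"
  by (simp add: kur_omega_def)

lemma kur_equilibria_iff:
  assumes "n > 0"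
  shows "\<theta> \<in> equilibria n (kur_omega n q) (kur_k n) \<longleftrightarrow>
    \<theta> \<in> {0..<n} \<rightarrow>\<^sub>E {-pi<..pi} \<and> (\<Sum>\<mu><n. sin (\<theta> \<mu>)) = 0 \<and> 0 \<le> (\<Sum>\<mu><n. cos (\<theta> \<mu>)) \<and>
    (\<forall>\<nu><n. sin (\<theta> \<nu>) * (\<Sum>\<mu><n. cos (\<theta> \<mu>)) = (if \<nu> < n div 2 then q else - q))"
proof -
  let ?C = "\<Sum>\<mu><n. cos (\<theta> \<mu>)" and ?S = "\<Sum>\<mu><n. sin (\<theta> \<mu>)"
  have "\<theta> \<in> equilibria n (kur_omega n q) (kur_k n) \<longleftrightarrow> \<theta> \<in> {0..<n} \<rightarrow>\<^sub>E {-pi<..pi} \<and> ?S = 0 \<and> 0 \<le> ?C \<and>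
      (\<forall>\<nu><n. sin (\<theta> \<nu>) * ?C - cos (\<theta> \<nu>) * ?S = (if \<nu> < n div 2 then q else - q))"
    using assms unfolding equilibria_def kur_interaction_sum[OF assms] complex_is_Real_iff
      kur_order_parameter kur_omega_eq
    by (simp add: zero_le_mult_iff eq_commute[of _ "_ - _"] conj_ac)
  then show ?thesis by (simp cong: conj_cong)
qed

text \<open>\<open>P\<close> is the set of oscillators with positive cosine, and \<open>a \<in> (0, \<pi>/2)\<close>.\<close>

definition kur_phases :: "nat \<Rightarrow> nat set \<Rightarrow> real \<Rightarrow> nat \<Rightarrow> real" where
  "kur_phases n P a \<nu> =
     (if \<nu> < n then (if \<nu> < n div 2 then 1 else -1) * (if \<nu> \<in> P then a else pi - a) else undefined)"

lemma sin_kur_phases: "\<nu> < n \<Longrightarrow> sin (kur_phases n P a \<nu>) = (if \<nu> < n div 2 then sin a else - sin a)"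
  by (simp add: kur_phases_def)

lemma cos_kur_phases: "\<nu> < n \<Longrightarrow> cos (kur_phases n P a \<nu>) = (if \<nu> \<in> P then cos a else - cos a)"
  by (simp add: kur_phases_def)

lemma kur_phases_PiE:
  "0 < a \<Longrightarrow> a < pi/2 \<Longrightarrow> kur_phases n P a \<in> {0..<n} \<rightarrow>\<^sub>E {-pi<..pi}"
  by (auto simp: PiE_iff extensional_def kur_phases_def)

lemma sum_sin_kur_phases:
  "even n \<Longrightarrow> (\<Sum>\<mu><n. sin (kur_phases n P a \<mu>)) = 0"
  using sum_plus_minus[of "{..<n div 2}" n "sin a"] by (auto simp: sin_kur_phases elim!: evenE)

lemma sum_cos_kur_phases:
  "P \<subseteq> {..<n} \<Longrightarrow> (\<Sum>\<mu><n. cos (kur_phases n P a \<mu>)) = cos a * (2 * real (card P) - real n)"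
  by (simp add: cos_kur_phases sum_plus_minus)

lemma kur_phases_inverse:
  assumes "n \<ge> 2" "P \<subseteq> {..<n}" "0 < a" "a < pi/2"
  shows "{\<nu>. \<nu> < n \<and> cos (kur_phases n P a \<nu>) > 0} = P"
    and "arcsin (sin (kur_phases n P a 0)) = a"
proof -
  have "cos a > 0" using assms by (intro cos_gt_zero) auto
  then show "{\<nu>. \<nu> < n \<and> cos (kur_phases n P a \<nu>) > 0} = P"
    using assms(2) by (auto simp: cos_kur_phases split: if_splits)
  show "arcsin (sin (kur_phases n P a 0)) = a"
    using assms by (simp add: sin_kur_phases arcsin_sin)
qed

lemma inj_on_kur_phases:
  assumes "n \<ge> 2"
  shows "inj_on (\<lambda>(P, a). kur_phases n P a) (Pow {..<n} \<times> {0<..<pi/2})"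
proof (rule inj_on_inverseI[where g = "\<lambda>\<theta>. ({\<nu>. \<nu> < n \<and> cos (\<theta> \<nu>) > 0}, arcsin (sin (\<theta> 0)))"])
  fix x assume "x \<in> Pow {..<n} \<times> {0<..<pi/2}"
  then obtain P a where "x = (P, a)" "P \<subseteq> {..<n}" "0 < a" "a < pi/2" by auto
  then show "({\<nu>. \<nu> < n \<and> cos ((\<lambda>(P, a). kur_phases n P a) x \<nu>) > 0},
      arcsin (sin ((\<lambda>(P, a). kur_phases n P a) x 0))) = x"
    using kur_phases_inverse[OF assms] by simp
qed

lemma kur_phases_in_equilibria:
  assumes "even n" "n \<ge> 2" "q > 0" "P \<subseteq> {..<n}" "0 < a" "a < pi/2"
    and "sin (2*a) * (2 * real (card P) - real n) = 2 * q"
  shows "kur_phases n P a \<in> equilibria n (kur_omega n q) (kur_k n)"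
proof -
  let ?C = "\<Sum>\<mu><n. cos (kur_phases n P a \<mu>)"
  have "sin a > 0" "cos a > 0" using assms(5,6) by (auto intro: sin_gt_zero cos_gt_zero)
  have C: "?C = cos a * (2 * real (card P) - real n)" using sum_cos_kur_phases[OF assms(4)] .
  have q: "q = sin a * ?C" using assms(7) unfolding C sin_double by simp
  then have "0 < ?C" using \<open>q > 0\<close> \<open>sin a > 0\<close> zero_less_mult_pos by blast
  then show ?thesis using assms(2,5,6) q sum_sin_kur_phases[OF assms(1), of P a]
    by (simp add: kur_equilibria_iff kur_phases_PiE sin_kur_phases)
qed

lemma eq_kur_phases:
  assumes "\<theta> \<in> {0..<n} \<rightarrow>\<^sub>E {-pi<..pi}" "0 < a" "a < pi/2"
    and "\<And>\<nu>. \<nu> < n \<Longrightarrow> sin (\<theta> \<nu>) = (if \<nu> < n div 2 then sin a else - sin a)"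
  shows "\<theta> = kur_phases n {\<nu>. \<nu> < n \<and> cos (\<theta> \<nu>) > 0} a"
proof
  fix \<nu>
  have "cos a > 0" using assms(2,3) by (intro cos_gt_zero) auto
  show "\<theta> \<nu> = kur_phases n {\<nu>. \<nu> < n \<and> cos (\<theta> \<nu>) > 0} a \<nu>"
  proof (cases "\<nu> < n")
    case False
    then show ?thesis using assms(1) by (auto simp: PiE_iff extensional_def kur_phases_def)
  next
    case True
    then have range: "-pi < \<theta> \<nu>" "\<theta> \<nu> \<le> pi" using assms(1) by (auto simp: PiE_iff)
    show ?thesis
    proof (cases "\<nu> < n div 2")
      case upper: True
      then have "\<theta> \<nu> = a \<or> \<theta> \<nu> = pi - a"
        using sin_eq_sin_cases[OF range assms(2,3)] assms(4)[OF True] by simp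
      then show ?thesis using True upper \<open>cos a > 0\<close> by (auto simp: kur_phases_def)
    next
      case lower: False
      then have "\<theta> \<nu> = - a \<or> \<theta> \<nu> = -(pi - a)"
        using sin_eq_minus_sin_cases[OF range assms(2,3)] assms(4)[OF True] by simp
      then show ?thesis using True lower \<open>cos a > 0\<close> by (auto simp: kur_phases_def)
    qed
  qed
qed

text \<open>The equations force \<open>sin \<theta>\<^sub>\<nu> = \<plusminus>q / r\<close> with \<open>r = \<Sum>\<mu>. cos \<theta>\<^sub>\<mu> > 0\<close>, and \<open>q / r = 1\<close>
  would make every cosine, hence \<open>r\<close>, vanish.\<close>

lemma equilibrium_eq_kur_phases:
  assumes "even n" "n \<ge> 2" "q > 0" "\<theta> \<in> equilibria n (kur_omega n q) (kur_k n)"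
  obtains P a where "P \<subseteq> {..<n}" "n < 2 * card P" "0 < a" "a < pi/2"
    "sin (2*a) * (2 * real (card P) - real n) = 2 * q" "\<theta> = kur_phases n P a"
proof -
  define C where "C = (\<Sum>\<mu><n. cos (\<theta> \<mu>))"
  have "0 < n div 2" "0 < n" using assms(2) by auto
  have "\<theta> \<in> {0..<n} \<rightarrow>\<^sub>E {-pi<..pi} \<and> (\<Sum>\<mu><n. sin (\<theta> \<mu>)) = 0 \<and> 0 \<le> C \<and>
      (\<forall>\<nu><n. sin (\<theta> \<nu>) * C = (if \<nu> < n div 2 then q else - q))"
    using assms(4) unfolding C_def kur_equilibria_iff[OF \<open>0 < n\<close>] .
  then have \<theta>: "\<theta> \<in> {0..<n} \<rightarrow>\<^sub>E {-pi<..pi}" "C \<ge> 0"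
    and sin_C: "\<And>\<nu>. \<nu> < n \<Longrightarrow> sin (\<theta> \<nu>) * C = (if \<nu> < n div 2 then q else - q)"
    by blast+
  have "sin (\<theta> 0) * C = q" using sin_C[of 0] \<open>0 < n div 2\<close> \<open>0 < n\<close> by simp
  then have "C > 0" using \<open>C \<ge> 0\<close> \<open>q > 0\<close> by (auto simp: less_le)
  define s where "s = q / C"
  have sin_\<theta>: "sin (\<theta> \<nu>) = (if \<nu> < n div 2 then s else - s)" if "\<nu> < n" for \<nu>
    using sin_C[OF that] \<open>C > 0\<close> by (simp add: s_def field_simps)
  have "0 < s" using \<open>q > 0\<close> \<open>C > 0\<close> by (simp add: s_def)
  have "s < 1"
  proof (rule ccontr)
    assume "\<not> s < 1"
    then have "s = 1" using sin_\<theta>[OF \<open>0 < n\<close>] \<open>0 < n div 2\<close> sin_le_one[of "\<theta> 0"] by simp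
    then have "(cos (\<theta> \<nu>))\<^sup>2 = 0" if "\<nu> < n" for \<nu>
      using sin_\<theta>[OF that] sin_cos_squared_add[of "\<theta> \<nu>"] by (simp split: if_splits)
    then have "C = 0" by (simp add: C_def)
    then show False using \<open>C > 0\<close> by simp
  qed
  define a where "a = arcsin s"
  have a: "0 < a" "a < pi/2" "sin a = s"
    using arcsin_less_mono[of 0 s] arcsin_less_mono[of s 1] \<open>0 < s\<close> \<open>s < 1\<close>
    by (simp_all add: a_def)
  define P where "P = {\<nu>. \<nu> < n \<and> cos (\<theta> \<nu>) > 0}"
  have "P \<subseteq> {..<n}" by (auto simp: P_def)
  have \<theta>_eq: "\<theta> = kur_phases n P a"
    unfolding P_def by (rule eq_kur_phases[OF \<theta>(1) a(1,2)]) (simp add: sin_\<theta> a(3))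
  have C_eq: "C = cos a * (2 * real (card P) - real n)"
    unfolding C_def \<theta>_eq using sum_cos_kur_phases[OF \<open>P \<subseteq> {..<n}\<close>] .
  have "cos a > 0" using a by (intro cos_gt_zero) auto
  then have "n < 2 * card P" using C_eq \<open>C > 0\<close> by (simp add: zero_less_mult_iff)
  moreover have "sin (2*a) * (2 * real (card P) - real n) = 2 * q"
    using \<open>C > 0\<close> by (simp add: sin_double C_eq[symmetric] a(3) s_def mult.assoc)
  ultimately show thesis using that \<open>P \<subseteq> {..<n}\<close> a(1,2) \<theta>_eq by blast
qed

lemma kur_equilibria_eq_image:
  assumes "even n" "n \<ge> 2" "q > 0"
  shows "equilibria n (kur_omega n q) (kur_k n) = (\<lambda>(P, a). kur_phases n P a) `
    (SIGMA P:{P. P \<subseteq> {..<n} \<and> n < 2 * card P}.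
       {a. 0 < a \<and> a < pi/2 \<and> sin (2*a) = 2 * q / (2 * real (card P) - real n)})"
    (is "?E = _ ` ?T")
proof -
  have solves: "sin (2*a) * (2 * real (card P) - real n) = 2 * q \<longleftrightarrow>
      sin (2*a) = 2 * q / (2 * real (card P) - real n)" if "n < 2 * card P" for P a
    using that by (simp add: eq_divide_eq)
  show ?thesis
  proof
    show "?E \<subseteq> (\<lambda>(P, a). kur_phases n P a) ` ?T"
    proof
      fix \<theta> assume "\<theta> \<in> ?E"
      then obtain P a where "P \<subseteq> {..<n}" "n < 2 * card P" "0 < a" "a < pi/2"
          "sin (2*a) * (2 * real (card P) - real n) = 2 * q" "\<theta> = kur_phases n P a"
        using equilibrium_eq_kur_phases[OF assms] by metis
      then show "\<theta> \<in> (\<lambda>(P, a). kur_phases n P a) ` ?T"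
        using solves by (intro image_eqI[of _ _ "(P, a)"]) auto
    qed
    show "(\<lambda>(P, a). kur_phases n P a) ` ?T \<subseteq> ?E"
      using kur_phases_in_equilibria[OF assms] solves by auto
  qed
qed

lemma card_kur_equilibria:
  assumes "even n" "n \<ge> 2" "q > 0"
  shows "finite (equilibria n (kur_omega n q) (kur_k n))"
    and "card (equilibria n (kur_omega n q) (kur_k n)) =
      (\<Sum>P | P \<subseteq> {..<n} \<and> n < 2 * card P.
         card {a. 0 < a \<and> a < pi/2 \<and> sin (2*a) = 2 * q / (2 * real (card P) - real n)})"
proof -
  let ?Ps = "{P. P \<subseteq> {..<n} \<and> n < 2 * card P}"
  let ?T = "SIGMA P:?Ps. {a. 0 < a \<and> a < pi/2 \<and> sin (2*a) = 2 * q / (2 * real (card P) - real n)}"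
  let ?E = "equilibria n (kur_omega n q) (kur_k n)"
  have "finite ?Ps" by (rule finite_subset[of _ "Pow {..<n}"]) auto
  then have "finite ?T" by (intro finite_SigmaI finite_sin_double_solutions)
  moreover have "inj_on (\<lambda>(P, a). kur_phases n P a) ?T"
    by (rule inj_on_subset[OF inj_on_kur_phases[OF assms(2)]]) auto
  ultimately have "finite ?E" "card ?E = card ?T"
    by (simp_all add: kur_equilibria_eq_image[OF assms] card_image)
  moreover have "card ?T =
      (\<Sum>P\<in>?Ps. card {a. 0 < a \<and> a < pi/2 \<and> sin (2*a) = 2 * q / (2 * real (card P) - real n)})"
    by (rule card_SigmaI[OF \<open>finite ?Ps\<close>]) (intro ballI finite_sin_double_solutions)
  ultimately show "finite ?E"
    and "card ?E = (\<Sum>P\<in>?Ps. card {a. 0 < a \<and> a < pi/2 \<and> sin (2*a) = 2 * q / (2 * real (card P) - real n)})"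
    by simp_all
qed

theorem corollary2:
  fixes n :: nat
  assumes "even n" and "n \<ge> 2"
  shows "(\<forall>q::real. q > 0 \<longrightarrow>
            finite (equilibria n (kur_omega n q) (kur_k n)) \<and>
            card (equilibria n (kur_omega n q) (kur_k n)) \<le> 2 ^ n - (n choose (n div 2))) \<and>
         (\<forall>q::real. 0 < q \<and> q < 1 \<longrightarrow>
            finite (equilibria n (kur_omega n q) (kur_k n)) \<and>
            card (equilibria n (kur_omega n q) (kur_k n)) = 2 ^ n - (n choose (n div 2)))"
proof -
  let ?Ps = "{P. P \<subseteq> {..<n} \<and> n < 2 * card P}"
  have count: "2 * card ?Ps = 2 ^ n - (n choose (n div 2))"
    using card_subsets_more_than_half[of "{..<n}"] assms(1) by simp
  have "card (equilibria n (kur_omega n q) (kur_k n)) \<le> 2 * card ?Ps" if "q > 0" for q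
  proof -
    have "(\<Sum>P\<in>?Ps. card {a. 0 < a \<and> a < pi/2 \<and> sin (2*a) = 2 * q / (2 * real (card P) - real n)})
        \<le> (\<Sum>P\<in>?Ps. 2)"
      by (rule sum_mono) (rule card_sin_double_solutions_le)
    then show ?thesis using card_kur_equilibria(2)[OF assms that] by (simp add: mult.commute)
  qed
  moreover have "card (equilibria n (kur_omega n q) (kur_k n)) = 2 * card ?Ps" if "0 < q" "q < 1" for q
  proof -
    have "card {a. 0 < a \<and> a < pi/2 \<and> sin (2*a) = 2 * q / (2 * real (card P) - real n)} = 2"
      if "P \<in> ?Ps" for P
    proof -
      \<comment> \<open>\<open>2|P| - n\<close> is positive and even, hence at least \<open>2 > 2q\<close>.\<close>
      have "n + 2 \<le> 2 * card P" using that \<open>even n\<close> by (auto elim!: evenE)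
      then show ?thesis using \<open>0 < q\<close> \<open>q < 1\<close> by (intro card_sin_double_solutions) simp_all
    qed
    then show ?thesis using card_kur_equilibria(2)[OF assms \<open>0 < q\<close>] by simp
  qed
  ultimately show ?thesis using card_kur_equilibria(1)[OF assms] count by simp
qed

end
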